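(* Let $\alpha\in(0,1)$, $\mathrm{g}\ge0$, $\epsilon>0$, and let $u^0,u^1,\dots,u^N\in\mathcal{V}_h$ be the solution of the variable-step L1 scheme described in the context. If the maximum time step satisfies $$\tau \le \left(\frac{3}{\Gamma(2-\alpha)(4\mathrm{g}^2+3\epsilon)}\right)^{1/\alpha},$$ then the modified discrete energy is nonincreasing: $\mathcal{E}[u^n]-\mathcal{E}[u^{n-1}]\le 0$ (equivalently $(\mathcal{E}[u^n]-\mathcal{E}[u^{n-1}])/\tau_n\le 0$) for all $1\le n\le N$.
   Context: Time grid: $0=t_0<t_1<\dots<t_N=T$, $\tau_k=t_k-t_{k-1}$, $\tau=\max_k\tau_k$, $\triangledown_\tau v^k=v^k-v^{k-1}$. Let $\omega_{\beta}(t)=t^{\beta-1}/\Gamma(\beta)$. The L1 kernels are $a^{(n)}_{n-k}=\frac{1}{\tau_k}\int_{t_{k-1}}^{t_k}\omega_{1-\alpha}(t_n-s)\,ds$ for $1\le k\le n$, and $D^\alpha_\tau v^n=\sum_{k=1}^n a^{(n)}_{n-k}\triangledown_\tau v^k$. The discrete complementary convolution kernels are defined by $p^{(n)}_0=1/a^{(n)}_0$ and $p^{(n)}_{n-k}=\frac{1}{a^{(k)}_0}\sum_{j=k+1}^n\big(a^{(j)}_{j-k-1}-a^{(j)}_{j-k}\big)p^{(n)}_{n-j}$ for $1\le k\le n-1$. Space: $\Omega=(0,L)^2$, $h=L/M$, $x_i=ih$, $y_j=jh$; $\mathcal{V}_h$ is the set of grid functions on $\{(x_i,y_j):0\le i,j\le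 M\}$ that are $L$-periodic in each direction; $\Delta_h=\delta_x^2+\delta_y^2$ with $\delta_x^2v_{ij}=(v_{i+1,j}-2v_{ij}+v_{i-1,j})/h^2$ and similarly $\delta_y^2$. Discrete inner product $\langle v,w\rangle=h^2\sum_{1\le i,j\le M-1}v_{ij}w_{ij}$, $\|v\|=\sqrt{\langle v,v\rangle}$, $\|v\|_4^4=h^2\sum_{1\le i,j\le M-1}v_{ij}^4$. Let $f(u)=u^3-\mathrm{g}u^2-\epsilon u$. The scheme: $u^0_h=u_0(x_h)$ and for $1\le n\le N$, $D^\alpha_\tau u^n_h=-\mu^n_h$ with $\mu^n_h=(1+\Delta_h)^2u^n_h+f(u^n_h)$ at the grid points, periodic boundary conditions. Discrete energy: $E[u^n]=\frac12\|(1+\Delta_h)u^n\|^2+\frac14\|u^n\|_4^4-\frac{\mathrm g}{3}\langle (u^n)^2,u^n\rangle-\frac{\epsilon}{2}\|u^n\|^2$. Modified energy: $\mathcal{E}[u^0]=E[u^0]$ and $\mathcal{E}[u^n]=E[u^n]+\frac12\sum_{j=1}^n p^{(n)}_{n-j}\|\mu^j\|^2$ for $n\ge1$. *)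

theory Defs
  imports "HOL-Analysis.Analysis"
begin

definition omega :: "real \<Rightarrow> real \<Rightarrow> real" where
  "omega \<beta> x = x powr (\<beta> - 1) / Gamma \<beta>"

definition tstep :: "(nat \<Rightarrow> real) \<Rightarrow> nat \<Rightarrow> real" where
  "tstep t k = t k - t (k - 1)"

definition tmax :: "(nat \<Rightarrow> real) \<Rightarrow> nat \<Rightarrow> real" where
  "tmax t N = Max (tstep t ` {1..N})"

(* L1 kernel:  L1a alpha t n k  =  a^{(n)}_{n-k}  (1 <= k <= n) *)
definition L1a :: "real \<Rightarrow> (nat \<Rightarrow> real) \<Rightarrow> nat \<Rightarrow> nat \<Rightarrow> real" where
  "L1a \<alpha> t n k = (1 / tstep t k) * integral {t (k - 1)..t k} (\<lambda>s. omega (1 - \<alpha>) (t n - s))"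

(* discrete complementary convolution kernels:  Pk alpha t n k = p^{(n)}_{n-k}  (1 <= k <= n) *)
function Pk :: "real \<Rightarrow> (nat \<Rightarrow> real) \<Rightarrow> nat \<Rightarrow> nat \<Rightarrow> real" where
  "Pk \<alpha> t n k =
     (if n \<le> k then 1 / L1a \<alpha> t n n
      else (1 / L1a \<alpha> t k k) *
           (\<Sum>j\<in>{k+1..n}. (L1a \<alpha> t j (k + 1) - L1a \<alpha> t j k) * Pk \<alpha> t n j))"
  by pat_completeness auto
termination
  by (relation "Wellfounded.measure (\<lambda>(\<alpha>, t, n, k). n - k)") auto

definition Dtau :: "real \<Rightarrow> (nat \<Rightarrow> real) \<Rightarrow> (nat \<Rightarrow> real) \<Rightarrow> nat \<Rightarrow> real" where
  "Dtau \<alpha> t v n = (\<Sum>k=1..n. L1a \<alpha> t n k * (v k - v (k - 1)))"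

(* grid functions indexed by integers, L-periodic i.e. M-periodic in the indices *)
type_synonym grid = "int \<Rightarrow> int \<Rightarrow> real"

definition grid_periodic :: "nat \<Rightarrow> grid \<Rightarrow> bool" where
  "grid_periodic M v \<longleftrightarrow> (\<forall>i j. v (i + int M) j = v i j \<and> v i (j + int M) = v i j)"

definition lap_h :: "real \<Rightarrow> grid \<Rightarrow> grid" where
  "lap_h h v = (\<lambda>i j. (v (i + 1) j - 2 * v i j + v (i - 1) j) / h\<^sup>2
                    + (v i (j + 1) - 2 * v i j + v i (j - 1)) / h\<^sup>2)"

definition opL :: "real \<Rightarrow> grid \<Rightarrow> grid" where
  "opL h v = (\<lambda>i j. v i j + lap_h h v i j)"

definition inner_h :: "nat \<Rightarrow> real \<Rightarrow> grid \<Rightarrow> grid \<Rightarrow> real" where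
  "inner_h M h v w = h\<^sup>2 * (\<Sum>i\<in>{1..int M}. \<Sum>j\<in>{1..int M}. v i j * w i j)"

definition norm_h :: "nat \<Rightarrow> real \<Rightarrow> grid \<Rightarrow> real" where
  "norm_h M h v = sqrt (inner_h M h v v)"

definition norm4_pow4 :: "nat \<Rightarrow> real \<Rightarrow> grid \<Rightarrow> real" where
  "norm4_pow4 M h v = h\<^sup>2 * (\<Sum>i\<in>{1..int M}. \<Sum>j\<in>{1..int M}. (v i j) ^ 4)"

definition fnl :: "real \<Rightarrow> real \<Rightarrow> real \<Rightarrow> real" where
  "fnl g \<epsilon> x = x ^ 3 - g * x\<^sup>2 - \<epsilon> * x"

definition mu_h :: "real \<Rightarrow> real \<Rightarrow> real \<Rightarrow> grid \<Rightarrow> grid" where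
  "mu_h g \<epsilon> h v = (\<lambda>i j. opL h (opL h v) i j + fnl g \<epsilon> (v i j))"

definition energy :: "nat \<Rightarrow> real \<Rightarrow> real \<Rightarrow> real \<Rightarrow> grid \<Rightarrow> real" where
  "energy M h g \<epsilon> v =
     1/2 * (norm_h M h (opL h v))\<^sup>2 + 1/4 * norm4_pow4 M h v
     - g / 3 * inner_h M h (\<lambda>i j. (v i j)\<^sup>2) v - \<epsilon> / 2 * (norm_h M h v)\<^sup>2"

definition mod_energy :: "real \<Rightarrow> (nat \<Rightarrow> real) \<Rightarrow> nat \<Rightarrow> real \<Rightarrow> real \<Rightarrow> real \<Rightarrow> (nat \<Rightarrow> grid) \<Rightarrow> nat \<Rightarrow> real" where
  "mod_energy \<alpha> t M h g \<epsilon> u n =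
     (if n = 0 then energy M h g \<epsilon> (u 0)
      else energy M h g \<epsilon> (u n)
           + 1/2 * (\<Sum>j=1..n. Pk \<alpha> t n j * (norm_h M h (mu_h g \<epsilon> h (u j)))\<^sup>2))"

end

theory Submission
  imports Defs
begin

(* Writing b_j = p^(n)_(n-j) - p^(n-1)_(n-1-j), the complementary identity
   sum_m p^(n)_(n-m) a^(m)_(m-k) = 1 inverts the L1 convolution, so the scheme gives
   u^n - u^(n-1) = - sum_j b_j mu^j.  Each L1 kernel is an increment of the concave function
   s^(1-alpha); by Cauchy's mean value theorem these increments are TP2-ordered and decrease
   down each column, and eliminating along the triangular system sum_j b_j a^(j)_(j-k) = [k = n]
   yields b_j <= 0 for j < n, b_n = 1 / a^(n)_0 > 0 and sum_j b_j >= 0.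
   The change of the memory term of the modified energy is (1/2) sum_j b_j |mu^j|^2, and since
   F(a) - F(b) <= f(a) (a - b) + (4g^2 + 3eps)/6 (a - b)^2 for the quartic potential F,
   E[u^n] - E[u^(n-1)] <= <mu^n, u^n - u^(n-1)> + (4g^2 + 3eps)/6 |u^n - u^(n-1)|^2.
   At every grid point a weighted Cauchy-Schwarz inequality over the weights -b_j (j < n)
   makes the sum of these two contributions nonpositive as soon as
   (4g^2 + 3eps)/3 <= 1 / b_n = a^(n)_0, and this is what the step size restriction gives. *)

(* Cut off at 0 so that it is continuous on all of the real line: powr of a negative base
   is a junk value. *)
definition pos_powr :: "real \<Rightarrow> real \<Rightarrow> real" where
  "pos_powr b z = max 0 z powr b"

lemma pos_powr_pos: "0 < z \<Longrightarrow> pos_powr b z = z powr b"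
  by (simp add: pos_powr_def)

lemma pos_powr_nonpos: "z \<le> 0 \<Longrightarrow> pos_powr b z = 0"
  by (simp add: pos_powr_def)

lemma pos_powr_strict_mono: "0 < b \<Longrightarrow> 0 \<le> x \<Longrightarrow> x < y \<Longrightarrow> pos_powr b x < pos_powr b y"
  by (auto simp: pos_powr_def intro: powr_less_mono2)

lemma continuous_on_pos_powr [continuous_intros]:
  assumes "0 < b" "continuous_on S f"
  shows "continuous_on S (\<lambda>x. pos_powr b (f x))"
  unfolding pos_powr_def using assms
  by (intro continuous_on_powr') (auto intro!: continuous_intros)

lemma isCont_pos_powr [continuous_intros]:
  assumes "0 < b" "isCont f x"
  shows "isCont (\<lambda>x. pos_powr b (f x)) x"
proof -
  have "isCont (pos_powr b) (f x)"
    using continuous_on_pos_powr[OF assms(1) continuous_on_id, of UNIV]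
    by (simp add: continuous_on_eq_continuous_at)
  with assms(2) show ?thesis by (rule isCont_o2)
qed

lemma DERIV_pos_powr [derivative_intros]:
  assumes "(f has_real_derivative f') (at x within S)" "0 < f x"
  shows "((\<lambda>x. pos_powr b (f x)) has_real_derivative b * f x powr (b - 1) * f') (at x within S)"
proof -
  have "(pos_powr b has_real_derivative b * f x powr (b - 1)) (at (f x))"
    by (rule has_field_derivative_transform_within_open[OF has_real_derivative_powr[OF assms(2)],
          of "{0<..}"]) (auto simp: pos_powr_pos assms(2))
  then show ?thesis using assms(1) by (rule DERIV_chain2)
qed

lemma pos_powr_increment_ratio:
  assumes "0 < \<beta>" "p < q" "q \<le> x" "x < y"
  obtains \<xi> where "p < \<xi>" "\<xi> < q"
    "pos_powr \<beta> (x - p) - pos_powr \<beta> (x - q)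
       = (pos_powr \<beta> (y - p) - pos_powr \<beta> (y - q)) * ((x - \<xi>) / (y - \<xi>)) powr (\<beta> - 1)"
proof -
  define f where "f s = pos_powr \<beta> (x - s)" for s
  define g where "g s = pos_powr \<beta> (y - s)" for s
  have "\<exists>\<xi>. p < \<xi> \<and> \<xi> < q \<and> (f q - f p) * - (\<beta> * (y - \<xi>) powr (\<beta> - 1))
                                   = (g q - g p) * - (\<beta> * (x - \<xi>) powr (\<beta> - 1))"
    unfolding f_def g_def using assms
    by (intro GMVT') (auto intro!: continuous_intros derivative_eq_intros)
  then obtain \<xi> where \<xi>: "p < \<xi>" "\<xi> < q"
    and "\<beta> * ((f p - f q) * (y - \<xi>) powr (\<beta> - 1)) = \<beta> * ((g p - g q) * (x - \<xi>) powr (\<beta> - 1))"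
    by (auto simp: algebra_simps)
  then have eq: "(f p - f q) * (y - \<xi>) powr (\<beta> - 1) = (g p - g q) * (x - \<xi>) powr (\<beta> - 1)"
    using assms(1) by simp
  have "f p - f q = (g p - g q) * ((x - \<xi>) / (y - \<xi>)) powr (\<beta> - 1)"
    using eq \<xi> assms by (simp add: powr_divide field_simps)
  with \<xi> show thesis unfolding f_def g_def by (rule that)
qed

lemma pos_powr_increments_tp2:
  assumes "0 < \<beta>" "\<beta> < 1" "a < b" "b < c" "c \<le> x" "x < y"
  shows "(pos_powr \<beta> (y - b) - pos_powr \<beta> (y - c)) * (pos_powr \<beta> (x - a) - pos_powr \<beta> (x - b))
       \<le> (pos_powr \<beta> (y - a) - pos_powr \<beta> (y - b)) * (pos_powr \<beta> (x - b) - pos_powr \<beta> (x - c))"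
proof -
  obtain \<xi>\<^sub>1 where \<xi>\<^sub>1: "a < \<xi>\<^sub>1" "\<xi>\<^sub>1 < b"
    and ab: "pos_powr \<beta> (x - a) - pos_powr \<beta> (x - b)
      = (pos_powr \<beta> (y - a) - pos_powr \<beta> (y - b)) * ((x - \<xi>\<^sub>1) / (y - \<xi>\<^sub>1)) powr (\<beta> - 1)"
    using pos_powr_increment_ratio[of \<beta> a b x y] assms by auto
  obtain \<xi>\<^sub>2 where \<xi>\<^sub>2: "b < \<xi>\<^sub>2" "\<xi>\<^sub>2 < c"
    and bc: "pos_powr \<beta> (x - b) - pos_powr \<beta> (x - c)
      = (pos_powr \<beta> (y - b) - pos_powr \<beta> (y - c)) * ((x - \<xi>\<^sub>2) / (y - \<xi>\<^sub>2)) powr (\<beta> - 1)"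
    using pos_powr_increment_ratio[of \<beta> b c x y] assms by auto
  \<comment> \<open>\<open>(x - \<xi>) / (y - \<xi>)\<close> decreases in \<open>\<xi>\<close> and the exponent \<open>\<beta> - 1\<close> is negative\<close>
  have "0 < (\<xi>\<^sub>2 - \<xi>\<^sub>1) * (y - x)"
    using \<xi>\<^sub>1 \<xi>\<^sub>2 assms by simp
  then have "(x - \<xi>\<^sub>2) * (y - \<xi>\<^sub>1) < (x - \<xi>\<^sub>1) * (y - \<xi>\<^sub>2)"
    by (simp add: algebra_simps)
  then have "(x - \<xi>\<^sub>2) / (y - \<xi>\<^sub>2) < (x - \<xi>\<^sub>1) / (y - \<xi>\<^sub>1)"
    using \<xi>\<^sub>1 \<xi>\<^sub>2 assms by (simp add: divide_simps)
  then have ratio: "((x - \<xi>\<^sub>1) / (y - \<xi>\<^sub>1)) powr (\<beta> - 1) \<le> ((x - \<xi>\<^sub>2) / (y - \<xi>\<^sub>2)) powr (\<beta> - 1)"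
    using \<xi>\<^sub>2 assms by (intro less_imp_le[OF powr_less_mono2_neg]) auto
  have "0 < pos_powr \<beta> (y - a) - pos_powr \<beta> (y - b)" "0 < pos_powr \<beta> (y - b) - pos_powr \<beta> (y - c)"
    using pos_powr_strict_mono[of \<beta>] assms by auto
  with ratio show ?thesis
    unfolding ab bc by (simp add: mult_left_mono mult.assoc mult.left_commute[of _ "_ powr _"])
qed

lemma pos_powr_increment_antimono:
  assumes "0 < \<beta>" "\<beta> < 1" "a < b" "b \<le> x" "x \<le> y"
  shows "pos_powr \<beta> (y - a) - pos_powr \<beta> (y - b) \<le> pos_powr \<beta> (x - a) - pos_powr \<beta> (x - b)"
proof (rule DERIV_nonpos_imp_decreasing_open[OF \<open>x \<le> y\<close>])
  show "continuous_on {x..y} (\<lambda>z. pos_powr \<beta> (z - a) - pos_powr \<beta> (z - b))"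
    using assms by (intro continuous_intros) auto
  fix z assume z: "x < z" "z < y"
  have "((\<lambda>z. pos_powr \<beta> (z - a) - pos_powr \<beta> (z - b)) has_real_derivative
          \<beta> * ((z - a) powr (\<beta> - 1) - (z - b) powr (\<beta> - 1))) (at z)"
    using z assms by (auto intro!: derivative_eq_intros simp: algebra_simps)
  moreover have "(z - a) powr (\<beta> - 1) \<le> (z - b) powr (\<beta> - 1)"
    using z assms by (intro less_imp_le[OF powr_less_mono2_neg]) auto
  ultimately show "\<exists>d. ((\<lambda>z. pos_powr \<beta> (z - a) - pos_powr \<beta> (z - b)) has_real_derivative d) (at z) \<and> d \<le> 0"
    using assms by (auto simp: mult_nonneg_nonpos)
qed

lemma Gamma_two_minus: "0 < (a::real) \<Longrightarrow> a < 1 \<Longrightarrow> Gamma (2 - a) = (1 - a) * Gamma (1 - a)"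
  using Gamma_plus1[of "1 - a"] nonpos_Ints_nonpos[of "1 - a"] by (force simp: algebra_simps)

declare Pk.simps[simp del]

lemma Pk_diag: "Pk \<alpha> t n n = 1 / L1a \<alpha> t n n"
  by (subst Pk.simps) simp

lemma Pk_rec: "k < n \<Longrightarrow> Pk \<alpha> t n k =
    1 / L1a \<alpha> t k k * (\<Sum>j=k+1..n. (L1a \<alpha> t j (k + 1) - L1a \<alpha> t j k) * Pk \<alpha> t n j)"
  by (subst Pk.simps) simp

definition Pk_delta :: "real \<Rightarrow> (nat \<Rightarrow> real) \<Rightarrow> nat \<Rightarrow> nat \<Rightarrow> real" where
  "Pk_delta \<alpha> t n j = Pk \<alpha> t n j - (if j < n then Pk \<alpha> t (n - 1) j else 0)"

lemma Pk_delta_diag: "Pk_delta \<alpha> t n n = 1 / L1a \<alpha> t n n"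
  by (simp add: Pk_delta_def Pk_diag)

lemma sum_Pk_delta:
  assumes "1 \<le> k"
  shows "(\<Sum>j=k..n. Pk_delta \<alpha> t n j * x j)
       = (\<Sum>j=k..n. Pk \<alpha> t n j * x j) - (\<Sum>j=k..n-1. Pk \<alpha> t (n - 1) j * x j)"
proof -
  have "{j \<in> {k..n}. j < n} = {k..n-1}"
    using assms by auto
  then have "(\<Sum>j=k..n. (if j < n then Pk \<alpha> t (n - 1) j * x j else 0)) = (\<Sum>j=k..n-1. Pk \<alpha> t (n - 1) j * x j)"
    by (simp flip: sum.inter_filter)
  then show ?thesis
    by (simp add: Pk_delta_def left_diff_distrib sum_subtractf if_distrib[of "\<lambda>p. p * x _"] cong: if_cong)
qed

locale L1_mesh =
  fixes \<alpha> :: real and t :: "nat \<Rightarrow> real" and N :: nat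
  assumes alpha_pos: "0 < \<alpha>" and alpha_less_one: "\<alpha> < 1"
    and mesh_step: "\<And>k. k \<in> {1..N} \<Longrightarrow> t (k - 1) < t k"
begin

lemma t_less: "i < j \<Longrightarrow> j \<le> N \<Longrightarrow> t i < t j"
proof (induction j)
  case (Suc j)
  then show ?case using mesh_step[of "Suc j"] by (cases "i = j") auto
qed simp

lemma t_le: "i \<le> j \<Longrightarrow> j \<le> N \<Longrightarrow> t i \<le> t j"
  using t_less by (cases "i = j") (auto intro: less_imp_le)

lemma Gamma_two_minus_alpha_pos: "0 < Gamma (2 - \<alpha>)"
  using alpha_less_one by simp

lemma tstep_pos: "1 \<le> k \<Longrightarrow> k \<le> N \<Longrightarrow> 0 < tstep t k"
  using mesh_step unfolding tstep_def by auto

lemma L1a_eq: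
  assumes "1 \<le> k" "k \<le> n" "n \<le> N"
  shows "L1a \<alpha> t n k = (pos_powr (1 - \<alpha>) (t n - t (k - 1)) - pos_powr (1 - \<alpha>) (t n - t k))
                         / (Gamma (2 - \<alpha>) * tstep t k)"
proof -
  let ?F = "\<lambda>s. - pos_powr (1 - \<alpha>) (t n - s) / Gamma (2 - \<alpha>)"
  have le: "t (k - 1) \<le> t k" "t k \<le> t n" using t_le assms by auto
  have "((\<lambda>s. omega (1 - \<alpha>) (t n - s)) has_integral ?F (t k) - ?F (t (k - 1))) {t (k - 1)..t k}"
  proof (rule fundamental_theorem_of_calculus_interior[OF le(1)])
    show "continuous_on {t (k - 1)..t k} ?F"
      using alpha_less_one Gamma_two_minus_alpha_pos
      by (intro continuous_intros) (auto simp del: Gamma_real_pos)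
    fix s assume s: "s \<in> {t (k - 1)<..<t k}"
    have "(?F has_real_derivative (1 - \<alpha>) * (t n - s) powr (1 - \<alpha> - 1) / Gamma (2 - \<alpha>)) (at s)"
      using s le Gamma_two_minus_alpha_pos by (auto intro!: derivative_eq_intros)
    moreover have "(1 - \<alpha>) * (t n - s) powr (1 - \<alpha> - 1) / Gamma (2 - \<alpha>) = omega (1 - \<alpha>) (t n - s)"
      using Gamma_two_minus[OF alpha_pos alpha_less_one] alpha_less_one by (simp add: omega_def)
    ultimately show "(?F has_vector_derivative omega (1 - \<alpha>) (t n - s)) (at s)"
      by (simp add: has_real_derivative_iff_has_vector_derivative)
  qed
  then show ?thesis
    unfolding L1a_def tstep_def by (simp add: integral_unique diff_divide_distrib)
qed

lemma L1a_pos: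
  assumes "1 \<le> k" "k \<le> n" "n \<le> N"
  shows "0 < L1a \<alpha> t n k"
proof -
  have "pos_powr (1 - \<alpha>) (t n - t k) < pos_powr (1 - \<alpha>) (t n - t (k - 1))"
    using pos_powr_strict_mono alpha_less_one mesh_step[of k] t_le[of k n] assms by auto
  then show ?thesis
    using L1a_eq[OF assms] tstep_pos[of k] Gamma_two_minus_alpha_pos assms by simp
qed

lemma L1a_diag:
  assumes "1 \<le> n" "n \<le> N"
  shows "L1a \<alpha> t n n = tstep t n powr (- \<alpha>) / Gamma (2 - \<alpha>)"
proof -
  have \<tau>: "0 < tstep t n" using tstep_pos assms by simp
  then have "L1a \<alpha> t n n = tstep t n powr (1 - \<alpha>) / (Gamma (2 - \<alpha>) * tstep t n)"
    using L1a_eq[of n n] assms by (simp add: pos_powr_pos pos_powr_nonpos tstep_def)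
  also have "\<dots> = tstep t n powr (- \<alpha>) / Gamma (2 - \<alpha>)"
    using \<tau> by (simp add: powr_diff powr_minus field_simps)
  finally show ?thesis .
qed

lemma L1a_tp2:
  assumes "1 \<le> j" "j < k" "k < n" "n \<le> N"
  shows "L1a \<alpha> t n (j + 1) * L1a \<alpha> t k j \<le> L1a \<alpha> t n j * L1a \<alpha> t k (j + 1)"
proof -
  let ?p = "pos_powr (1 - \<alpha>)"
  have "(?p (t n - t j) - ?p (t n - t (j + 1))) * (?p (t k - t (j - 1)) - ?p (t k - t j))
       \<le> (?p (t n - t (j - 1)) - ?p (t n - t j)) * (?p (t k - t j) - ?p (t k - t (j + 1)))"
    using alpha_pos alpha_less_one assms mesh_step[of j] mesh_step[of "j + 1"] t_le[of "j + 1" k] t_less[of k n]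
    by (intro pos_powr_increments_tp2) auto
  moreover have "0 < Gamma (2 - \<alpha>) * tstep t j * (Gamma (2 - \<alpha>) * tstep t (j + 1))"
    using tstep_pos assms alpha_less_one by simp
  ultimately show ?thesis
    using assms by (simp add: L1a_eq divide_right_mono mult.commute)
qed

lemma L1a_antimono_column:
  assumes "1 \<le> k" "k \<le> j" "j \<le> n" "n \<le> N"
  shows "L1a \<alpha> t n k \<le> L1a \<alpha> t j k"
proof -
  let ?p = "pos_powr (1 - \<alpha>)"
  have "?p (t n - t (k - 1)) - ?p (t n - t k) \<le> ?p (t j - t (k - 1)) - ?p (t j - t k)"
    using alpha_pos alpha_less_one assms mesh_step[of k] t_le[of k j] t_le[of j n]
    by (intro pos_powr_increment_antimono) auto
  moreover have "0 < Gamma (2 - \<alpha>) * tstep t k"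
    using tstep_pos assms alpha_less_one by simp
  ultimately show ?thesis
    using assms by (simp add: L1a_eq divide_right_mono)
qed

lemma Pk_L1a_sum:
  assumes "1 \<le> k" "k \<le> n" "n \<le> N"
  shows "(\<Sum>m=k..n. Pk \<alpha> t n m * L1a \<alpha> t m k) = 1"
  using assms(2,1)
proof (induction k rule: inc_induct)
  case base
  then show ?case using L1a_pos[of n n] assms by (simp add: Pk_diag)
next
  case (step k)
  have "(\<Sum>m=k..n. Pk \<alpha> t n m * L1a \<alpha> t m k)
      = Pk \<alpha> t n k * L1a \<alpha> t k k + (\<Sum>m=k+1..n. Pk \<alpha> t n m * L1a \<alpha> t m k)"
    using step.hyps by (simp add: sum.atLeast_Suc_atMost)
  also have "Pk \<alpha> t n k * L1a \<alpha> t k k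
      = (\<Sum>m=k+1..n. (L1a \<alpha> t m (k + 1) - L1a \<alpha> t m k) * Pk \<alpha> t n m)"
    using Pk_rec[OF step.hyps(2)] L1a_pos[of k k] step assms by simp
  also have "\<dots> + (\<Sum>m=k+1..n. Pk \<alpha> t n m * L1a \<alpha> t m k)
      = (\<Sum>m=Suc k..n. Pk \<alpha> t n m * L1a \<alpha> t m (Suc k))"
    by (simp add: sum.distrib[symmetric] algebra_simps)
  finally show ?case using step by simp
qed

lemma Pk_Dtau_sum:
  assumes "n \<le> N"
  shows "(\<Sum>m=1..n. Pk \<alpha> t n m * Dtau \<alpha> t v m) = v n - v 0"
proof -
  let ?f = "\<lambda>m k. Pk \<alpha> t n m * (L1a \<alpha> t m k * (v k - v (k - 1)))"
  have "(\<Sum>m=1..n. Pk \<alpha> t n m * Dtau \<alpha> t v m) = (\<Sum>m\<in>{1..n}. \<Sum>k\<in>{k. k \<in> {1..n} \<and> k \<le> m}. ?f m k)"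
  proof (rule sum.cong[OF refl])
    fix m assume "m \<in> {1..n}"
    then have "{k. k \<in> {1..n} \<and> k \<le> m} = {1..m}" by auto
    then show "Pk \<alpha> t n m * Dtau \<alpha> t v m = (\<Sum>k\<in>{k. k \<in> {1..n} \<and> k \<le> m}. ?f m k)"
      unfolding Dtau_def by (simp add: sum_distrib_left)
  qed
  also have "\<dots> = (\<Sum>k\<in>{1..n}. \<Sum>m\<in>{m. m \<in> {1..n} \<and> k \<le> m}. ?f m k)"
    by (rule sum.swap_restrict) auto
  also have "\<dots> = (\<Sum>k\<in>{1..n}. (v k - v (k - 1)) * (\<Sum>m=k..n. Pk \<alpha> t n m * L1a \<alpha> t m k))"
  proof (rule sum.cong[OF refl])
    fix k assume "k \<in> {1..n}"
    then have "{m. m \<in> {1..n} \<and> k \<le> m} = {k..n}" by auto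
    then show "(\<Sum>m\<in>{m. m \<in> {1..n} \<and> k \<le> m}. ?f m k)
        = (v k - v (k - 1)) * (\<Sum>m=k..n. Pk \<alpha> t n m * L1a \<alpha> t m k)"
      by (simp add: sum_distrib_left algebra_simps)
  qed
  also have "\<dots> = (\<Sum>k\<in>{Suc 0..n}. v k - v (k - 1))"
    using Pk_L1a_sum assms by (intro sum.cong) auto
  also have "\<dots> = v n - v 0"
    by (rule sum_telescope'') simp
  finally show ?thesis .
qed

lemma Pk_delta_L1a_sum:
  assumes "1 \<le> k" "k \<le> n" "n \<le> N"
  shows "(\<Sum>j=k..n. Pk_delta \<alpha> t n j * L1a \<alpha> t j k) = (if k = n then 1 else 0)"
proof (cases "k = n")
  case True
  then show ?thesis using L1a_pos[of n n] assms by (simp add: Pk_delta_diag)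
next
  case False
  then show ?thesis
    using assms Pk_L1a_sum[of k n] Pk_L1a_sum[of k "n - 1"] by (simp add: sum_Pk_delta)
qed

lemma Pk_delta_Dtau_sum:
  assumes "1 \<le> n" "n \<le> N"
  shows "(\<Sum>m=1..n. Pk_delta \<alpha> t n m * Dtau \<alpha> t v m) = v n - v (n - 1)"
  using assms Pk_Dtau_sum[of n] Pk_Dtau_sum[of "n - 1"] by (simp add: sum_Pk_delta)

lemma Pk_delta_elimination:
  assumes "1 \<le> j" "j < n" "n \<le> N"
  shows "L1a \<alpha> t n (j + 1) * L1a \<alpha> t j j * Pk_delta \<alpha> t n j
       + (\<Sum>k=j+1..n. Pk_delta \<alpha> t n k
            * (L1a \<alpha> t n (j + 1) * L1a \<alpha> t k j - L1a \<alpha> t n j * L1a \<alpha> t k (j + 1)))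
       = - (if j + 1 = n then L1a \<alpha> t n j else 0)"
proof -
  let ?A = "L1a \<alpha> t" and ?B = "Pk_delta \<alpha> t n"
  have col_j: "?B j * ?A j j + (\<Sum>k=j+1..n. ?B k * ?A k j) = 0"
    using Pk_delta_L1a_sum[of j n] assms by (simp add: sum.atLeast_Suc_atMost)
  have col_j1: "(\<Sum>k=j+1..n. ?B k * ?A k (j + 1)) = (if j + 1 = n then 1 else 0)"
    using Pk_delta_L1a_sum[of "j + 1" n] assms by simp
  have "?A n (j + 1) * ?A j j * ?B j
       + (\<Sum>k=j+1..n. ?B k * (?A n (j + 1) * ?A k j - ?A n j * ?A k (j + 1)))
     = ?A n (j + 1) * (?B j * ?A j j + (\<Sum>k=j+1..n. ?B k * ?A k j))
       - ?A n j * (\<Sum>k=j+1..n. ?B k * ?A k (j + 1))"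
    by (simp add: sum_distrib_left sum_subtractf algebra_simps)
  then show ?thesis
    unfolding col_j col_j1 by simp
qed

lemma Pk_delta_nonpos:
  assumes "1 \<le> j" "j < n" "n \<le> N"
  shows "Pk_delta \<alpha> t n j \<le> 0"
  using assms
proof (induction "n - j" arbitrary: j rule: less_induct)
  case less
  let ?A = "L1a \<alpha> t" and ?B = "Pk_delta \<alpha> t n"
  have "0 \<le> (\<Sum>k=j+1..n. ?B k * (?A n (j + 1) * ?A k j - ?A n j * ?A k (j + 1)))"
  proof (rule sum_nonneg)
    fix k assume k: "k \<in> {j+1..n}"
    show "0 \<le> ?B k * (?A n (j + 1) * ?A k j - ?A n j * ?A k (j + 1))"
    proof (cases "k = n")
      case False
      then have "?B k \<le> 0" using less.hyps[of k] less.prems k by fastforce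
      moreover have "?A n (j + 1) * ?A k j - ?A n j * ?A k (j + 1) \<le> 0"
        using L1a_tp2[of j k n] less.prems k False by simp
      ultimately show ?thesis by (rule mult_nonpos_nonpos)
    qed simp
  qed
  moreover have "0 < ?A n j" "0 < ?A n (j + 1) * ?A j j"
    using L1a_pos less.prems by simp_all
  ultimately show "?B j \<le> 0"
    using Pk_delta_elimination[OF less.prems] by (smt (verit) zero_less_mult_iff)
qed

lemma Pk_delta_sum_nonneg:
  assumes "1 \<le> n" "n \<le> N"
  shows "0 \<le> (\<Sum>j=1..n. Pk_delta \<alpha> t n j)"
proof -
  let ?A = "L1a \<alpha> t" and ?B = "Pk_delta \<alpha> t n"
  have "0 \<le> (\<Sum>j=1..n. ?B j * ?A j 1)"
    using Pk_delta_L1a_sum[of 1 n] assms by simp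
  also have "\<dots> \<le> (\<Sum>j=1..n. ?B j * ?A n 1)"
  proof (rule sum_mono)
    fix j assume j: "j \<in> {1..n}"
    show "?B j * ?A j 1 \<le> ?B j * ?A n 1"
    proof (cases "j = n")
      case False
      then show ?thesis
        using Pk_delta_nonpos[of j n] L1a_antimono_column[of 1 j n] j assms
        by (simp add: mult_left_mono_neg)
    qed simp
  qed
  also have "\<dots> = ?A n 1 * (\<Sum>j=1..n. ?B j)"
    by (simp add: sum_distrib_left mult.commute)
  finally show ?thesis
    using L1a_pos[of 1 n] assms by (simp add: zero_le_mult_iff)
qed

lemma L1a_diag_ge:
  assumes "1 \<le> n" "n \<le> N" "0 < c"
    and "tmax t N \<le> (1 / (Gamma (2 - \<alpha>) * c)) powr (1 / \<alpha>)"
  shows "c \<le> L1a \<alpha> t n n"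
proof -
  let ?\<tau> = "tstep t n" and ?\<Gamma> = "Gamma (2 - \<alpha>)"
  have \<tau>: "0 < ?\<tau>" using tstep_pos assms by simp
  have "?\<tau> \<le> tmax t N"
    unfolding tmax_def using assms by (intro Max_ge) auto
  then have "?\<tau> powr \<alpha> \<le> ((1 / (?\<Gamma> * c)) powr (1 / \<alpha>)) powr \<alpha>"
    using assms(4) \<tau> alpha_pos by (intro powr_mono2) auto
  also have "\<dots> = 1 / (?\<Gamma> * c)"
    using alpha_pos Gamma_two_minus_alpha_pos assms(3) by (simp add: powr_powr)
  finally have "c * (?\<tau> powr \<alpha> * ?\<Gamma>) \<le> 1"
    using Gamma_two_minus_alpha_pos assms(3) by (simp add: field_simps)
  moreover have "L1a \<alpha> t n n = 1 / (?\<tau> powr \<alpha> * ?\<Gamma>)"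
    using L1a_diag[OF assms(1,2)] by (simp add: powr_minus divide_inverse)
  ultimately show ?thesis
    using \<tau> Gamma_two_minus_alpha_pos by (simp add: le_divide_eq)
qed

end

lemma weighted_Cauchy_Schwarz_sum:
  fixes q m :: "'a \<Rightarrow> real"
  assumes "\<And>j. j \<in> S \<Longrightarrow> 0 \<le> q j"
  shows "(\<Sum>j\<in>S. q j * m j)\<^sup>2 \<le> (\<Sum>j\<in>S. q j) * (\<Sum>j\<in>S. q j * (m j)\<^sup>2)"
proof -
  have "(\<Sum>j\<in>S. sqrt (q j) * (sqrt (q j) * m j))\<^sup>2
      \<le> (\<Sum>j\<in>S. (sqrt (q j))\<^sup>2) * (\<Sum>j\<in>S. (sqrt (q j) * m j)\<^sup>2)"
    by (rule Cauchy_Schwarz_ineq_sum)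
  also have "\<dots> = (\<Sum>j\<in>S. q j) * (\<Sum>j\<in>S. q j * (m j)\<^sup>2)"
    using assms by (simp add: power_mult_distrib)
  finally show ?thesis
    using assms by (simp add: mult.assoc[symmetric] cong: sum.cong)
qed

lemma memory_quadratic_form_nonpos:
  fixes b m :: "nat \<Rightarrow> real"
  assumes "1 \<le> n" and "0 < b n" and "\<And>j. 1 \<le> j \<Longrightarrow> j < n \<Longrightarrow> b j \<le> 0"
    and "0 \<le> (\<Sum>j=1..n. b j)" and "2 * c * b n \<le> 1"
    and w: "w = - (\<Sum>j=1..n. b j * m j)"
  shows "m n * w + c * w\<^sup>2 + 1/2 * (\<Sum>j=1..n. b j * (m j)\<^sup>2) \<le> 0"
proof -
  let ?p = "b n"
  define X where "X = (\<Sum>j\<in>{1..<n}. - b j * m j)"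
  define W where "W = (\<Sum>j\<in>{1..<n}. - b j * (m j)\<^sup>2)"
  have split: "{1..n} = insert n {1..<n}"
    using assms(1) by auto
  have w_eq: "w = X - ?p * m n" and sum_eq: "(\<Sum>j=1..n. b j * (m j)\<^sup>2) = ?p * (m n)\<^sup>2 - W"
    unfolding w X_def W_def split by (simp_all add: sum_negf)
  have weights: "0 \<le> - b j" if "j \<in> {1..<n}" for j
    using assms(3) that by simp
  have "X\<^sup>2 \<le> (\<Sum>j\<in>{1..<n}. - b j) * W"
    unfolding X_def W_def by (rule weighted_Cauchy_Schwarz_sum[OF weights])
  also have "\<dots> \<le> ?p * W"
    using assms(4) weights unfolding split W_def
    by (intro mult_right_mono sum_nonneg) (auto simp: sum_negf intro: mult_nonpos_nonneg)
  finally have CS: "X\<^sup>2 \<le> ?p * W" .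
  have "(2 * c * ?p) * w\<^sup>2 \<le> 1 * w\<^sup>2"
    using assms(5) by (intro mult_right_mono) auto
  then have "2 * ?p * c * w\<^sup>2 \<le> w\<^sup>2"
    by (simp add: ac_simps)
  \<comment> \<open>complete the square in \<open>m n\<close>\<close>
  moreover have "2 * ?p * (m n * w + c * w\<^sup>2 + 1/2 * (?p * (m n)\<^sup>2 - W))
        = - (w\<^sup>2) + 2 * ?p * c * w\<^sup>2 + (X\<^sup>2 - ?p * W)"
    unfolding w_eq by (simp add: algebra_simps power2_eq_square)
  ultimately have "2 * ?p * (m n * w + c * w\<^sup>2 + 1/2 * (?p * (m n)\<^sup>2 - W)) \<le> 0"
    using CS by linarith
  then show ?thesis
    using assms(2) sum_eq by (simp add: mult_le_0_iff)
qed

lemma periodic_fun_simple_shift: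
  "periodic_fun_simple f p \<Longrightarrow> periodic_fun_simple (\<lambda>i. f (i + k)) p"
  unfolding periodic_fun_simple_def by (metis add.commute add.left_commute)

lemma periodic_fun_simple_mult:
  "periodic_fun_simple f p \<Longrightarrow> periodic_fun_simple g p \<Longrightarrow> periodic_fun_simple (\<lambda>i. f i * g i) p"
  unfolding periodic_fun_simple_def by simp

lemma sum_periodic_shift:
  fixes f :: "int \<Rightarrow> 'a::cancel_comm_monoid_add"
  assumes "periodic_fun_simple f (int M)"
  shows "(\<Sum>i\<in>{1..int M}. f (i + 1)) = (\<Sum>i\<in>{1..int M}. f i)"
proof -
  have "(\<Sum>i\<in>{1..int M}. f (i + 1)) = (\<Sum>i\<in>{2..int M + 1}. f i)"
    by (rule sum.reindex_bij_witness[of _ "\<lambda>i. i - 1" "\<lambda>i. i + 1"]) auto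
  moreover have "{1..int M + 1} = insert 1 {2..int M + 1}"
    by auto
  then have "(\<Sum>i\<in>{1..int M + 1}. f i) = f 1 + (\<Sum>i\<in>{2..int M + 1}. f i)"
    by simp
  moreover have "{1..int M + 1} = insert (int M + 1) {1..int M}"
    by auto
  then have "(\<Sum>i\<in>{1..int M + 1}. f i) = f (int M + 1) + (\<Sum>i\<in>{1..int M}. f i)"
    by simp
  moreover have "f (int M + 1) = f 1"
    using periodic_fun_simple.plus_period[OF assms, of 1] by (simp add: add.commute)
  ultimately show ?thesis
    by (metis add_left_imp_eq)
qed

lemma sum_second_diff_symmetric:
  fixes v w :: "int \<Rightarrow> real"
  assumes v: "periodic_fun_simple v (int M)" and w: "periodic_fun_simple w (int M)"
  shows "(\<Sum>i\<in>{1..int M}. (v (i + 1) - 2 * v i + v (i - 1)) * w i)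
       = (\<Sum>i\<in>{1..int M}. v i * (w (i + 1) - 2 * w i + w (i - 1)))"
proof -
  have "(\<Sum>i\<in>{1..int M}. v (i + 1) * w (i + 1 - 1)) = (\<Sum>i\<in>{1..int M}. v i * w (i - 1))"
    using v periodic_fun_simple_shift[OF w, of "-1"]
    by (intro sum_periodic_shift periodic_fun_simple_mult) simp_all
  moreover have "(\<Sum>i\<in>{1..int M}. v (i + 1 - 1) * w (i + 1)) = (\<Sum>i\<in>{1..int M}. v (i - 1) * w i)"
    using w periodic_fun_simple_shift[OF v, of "-1"]
    by (intro sum_periodic_shift periodic_fun_simple_mult) simp_all
  ultimately show ?thesis
    by (simp add: algebra_simps sum.distrib sum_subtractf sum_distrib_left)
qed

definition grid_sum :: "nat \<Rightarrow> grid \<Rightarrow> real" where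
  "grid_sum M F = (\<Sum>i\<in>{1..int M}. \<Sum>j\<in>{1..int M}. F i j)"

lemma grid_sum_add: "grid_sum M (\<lambda>i j. F i j + G i j) = grid_sum M F + grid_sum M G"
  unfolding grid_sum_def by (simp add: sum.distrib)

lemma grid_sum_diff: "grid_sum M (\<lambda>i j. F i j - G i j) = grid_sum M F - grid_sum M G"
  unfolding grid_sum_def by (simp add: sum_subtractf)

lemma grid_sum_cmult: "grid_sum M (\<lambda>i j. c * F i j) = c * grid_sum M F"
  unfolding grid_sum_def by (simp add: sum_distrib_left)

lemma grid_sum_sum: "grid_sum M (\<lambda>i j. \<Sum>m\<in>A. F m i j) = (\<Sum>m\<in>A. grid_sum M (F m))"
  unfolding grid_sum_def by (simp add: sum.swap[of _ A])

lemma grid_sum_mono: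
  "(\<And>i j. i \<in> {1..int M} \<Longrightarrow> j \<in> {1..int M} \<Longrightarrow> F i j \<le> G i j) \<Longrightarrow> grid_sum M F \<le> grid_sum M G"
  unfolding grid_sum_def by (intro sum_mono) auto

lemma inner_h_eq_grid_sum: "inner_h M h v w = h\<^sup>2 * grid_sum M (\<lambda>i j. v i j * w i j)"
  unfolding inner_h_def grid_sum_def ..

lemma norm_h_sq_eq_grid_sum: "(norm_h M h v)\<^sup>2 = h\<^sup>2 * grid_sum M (\<lambda>i j. (v i j)\<^sup>2)"
proof -
  have "0 \<le> inner_h M h v v"
    unfolding inner_h_def by (intro mult_nonneg_nonneg[OF zero_le_power2] sum_nonneg) simp
  then show ?thesis
    unfolding norm_h_def by (simp add: inner_h_eq_grid_sum power2_eq_square)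
qed

lemma norm4_pow4_eq_grid_sum: "norm4_pow4 M h v = h\<^sup>2 * grid_sum M (\<lambda>i j. (v i j) ^ 4)"
  unfolding norm4_pow4_def grid_sum_def ..

lemma opL_periodic:
  assumes "grid_periodic M v"
  shows "grid_periodic M (opL h v)"
proof -
  have per: "v (i + int M) j = v i j" "v i (j + int M) = v i j" for i j
    using assms unfolding grid_periodic_def by auto
  have "v (i + int M + 1) j = v (i + 1) j" "v (i + int M - 1) j = v (i - 1) j"
    "v i (j + int M + 1) = v i (j + 1)" "v i (j + int M - 1) = v i (j - 1)" for i j
    using per by (metis add.commute add.left_commute, metis diff_add_eq,
                  metis add.commute add.left_commute, metis diff_add_eq)
  with per show ?thesis
    unfolding grid_periodic_def opL_def lap_h_def by (simp add: algebra_simps)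
qed

lemma grid_sum_opL_symmetric:
  assumes v: "grid_periodic M v" and w: "grid_periodic M w"
  shows "grid_sum M (\<lambda>i j. opL h v i j * w i j) = grid_sum M (\<lambda>i j. v i j * opL h w i j)"
proof -
  let ?Dx = "\<lambda>v i j. v (i + 1) j - 2 * v i j + v (i - 1) j"
  let ?Dy = "\<lambda>v i j. v i (j + 1) - 2 * v i j + v i (j - 1)"
  have col: "periodic_fun_simple (\<lambda>i. f i j) (int M)" and row: "periodic_fun_simple (f i) (int M)"
    if "grid_periodic M f" for f :: grid and i j
    using that unfolding grid_periodic_def periodic_fun_simple_def by simp_all
  have x: "grid_sum M (\<lambda>i j. ?Dx v i j * w i j) = grid_sum M (\<lambda>i j. v i j * ?Dx w i j)"
    unfolding grid_sum_def
    by (subst (1 2) sum.swap) (simp add: sum_second_diff_symmetric[OF col[OF v] col[OF w]])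
  have y: "grid_sum M (\<lambda>i j. ?Dy v i j * w i j) = grid_sum M (\<lambda>i j. v i j * ?Dy w i j)"
    unfolding grid_sum_def by (simp add: sum_second_diff_symmetric[OF row[OF v] row[OF w]])
  have "opL h v i j * w i j = v i j * w i j + (?Dx v i j * w i j) / h\<^sup>2 + (?Dy v i j * w i j) / h\<^sup>2"
    "v i j * opL h w i j = v i j * w i j + (v i j * ?Dx w i j) / h\<^sup>2 + (v i j * ?Dy w i j) / h\<^sup>2" for i j
    unfolding opL_def lap_h_def by (simp_all add: algebra_simps add_divide_distrib)
  then show ?thesis
    using x y by (simp add: grid_sum_add divide_inverse grid_sum_cmult[where c = "inverse (h\<^sup>2)", simplified mult.commute])
qed

definition fnl_potential :: "real \<Rightarrow> real \<Rightarrow> real \<Rightarrow> real" where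
  "fnl_potential g \<epsilon> x = x ^ 4 / 4 - g / 3 * x ^ 3 - \<epsilon> / 2 * x\<^sup>2"

lemma fnl_potential_diff_le:
  "fnl_potential g \<epsilon> a - fnl_potential g \<epsilon> b
     \<le> fnl g \<epsilon> a * (a - b) + (4 * g\<^sup>2 + 3 * \<epsilon>) / 6 * (a - b)\<^sup>2"
proof -
  define d where "d = a - b"
  define Q where "Q = 1/4 * (d - 2 * a + 2 * g / 3)\<^sup>2 + 1/2 * (a - g / 3)\<^sup>2 + g\<^sup>2 / 2"
  have "fnl g \<epsilon> a * (a - b) + (4 * g\<^sup>2 + 3 * \<epsilon>) / 6 * (a - b)\<^sup>2
        - (fnl_potential g \<epsilon> a - fnl_potential g \<epsilon> b) = d\<^sup>2 * Q"
    unfolding d_def Q_def fnl_potential_def fnl_def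
    by (simp add: power2_eq_square power3_eq_cube power4_eq_xxxx field_simps)
  moreover have "0 \<le> d\<^sup>2 * Q"
    unfolding Q_def by simp
  ultimately show ?thesis by linarith
qed

lemma energy_eq_grid_sum:
  "energy M h g \<epsilon> v = h\<^sup>2 * grid_sum M (\<lambda>i j. 1/2 * (opL h v i j)\<^sup>2 + fnl_potential g \<epsilon> (v i j))"
proof -
  have "grid_sum M (\<lambda>i j. 1/2 * (opL h v i j)\<^sup>2 + fnl_potential g \<epsilon> (v i j))
      = grid_sum M (\<lambda>i j. 1/2 * (opL h v i j)\<^sup>2 + 1/4 * (v i j) ^ 4
                           - g/3 * ((v i j)\<^sup>2 * v i j) - \<epsilon>/2 * (v i j)\<^sup>2)"
    unfolding fnl_potential_def by (simp add: power2_eq_square power3_eq_cube algebra_simps)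
  also have "\<dots> = 1/2 * grid_sum M (\<lambda>i j. (opL h v i j)\<^sup>2) + 1/4 * grid_sum M (\<lambda>i j. (v i j) ^ 4)
                  - g/3 * grid_sum M (\<lambda>i j. (v i j)\<^sup>2 * v i j) - \<epsilon>/2 * grid_sum M (\<lambda>i j. (v i j)\<^sup>2)"
    by (simp only: grid_sum_add grid_sum_diff grid_sum_cmult)
  finally have eq: "grid_sum M (\<lambda>i j. 1/2 * (opL h v i j)\<^sup>2 + fnl_potential g \<epsilon> (v i j)) = \<dots>" .
  show ?thesis
    unfolding energy_def norm_h_sq_eq_grid_sum inner_h_eq_grid_sum norm4_pow4_eq_grid_sum eq
    by (simp add: algebra_simps)
qed

lemma energy_diff_le:
  assumes "grid_periodic M v" "grid_periodic M v'"
  shows "energy M h g \<epsilon> v - energy M h g \<epsilon> v'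
     \<le> h\<^sup>2 * grid_sum M (\<lambda>i j. mu_h g \<epsilon> h v i j * (v i j - v' i j)
                                + (4 * g\<^sup>2 + 3 * \<epsilon>) / 6 * (v i j - v' i j)\<^sup>2)"
proof -
  define w where "w i j = v i j - v' i j" for i j
  define c where "c = (4 * g\<^sup>2 + 3 * \<epsilon>) / 6"
  have w_periodic: "grid_periodic M w"
    using assms unfolding grid_periodic_def w_def by simp
  have opL_v': "opL h v' i j = opL h v i j - opL h w i j" for i j
    unfolding opL_def lap_h_def w_def
    by (simp add: add_divide_distrib[symmetric] diff_divide_distrib[symmetric] algebra_simps)
  have pointwise: "1/2 * (opL h v i j)\<^sup>2 + fnl_potential g \<epsilon> (v i j)
        - (1/2 * (opL h v' i j)\<^sup>2 + fnl_potential g \<epsilon> (v' i j))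
      \<le> opL h v i j * opL h w i j + (fnl g \<epsilon> (v i j) * w i j + c * (w i j)\<^sup>2)" for i j
  proof -
    have "1/2 * (opL h v i j)\<^sup>2 - 1/2 * (opL h v' i j)\<^sup>2 = opL h v i j * opL h w i j - 1/2 * (opL h w i j)\<^sup>2"
      unfolding opL_v' by (simp add: algebra_simps power2_eq_square)
    moreover have "fnl_potential g \<epsilon> (v i j) - fnl_potential g \<epsilon> (v' i j) \<le> fnl g \<epsilon> (v i j) * w i j + c * (w i j)\<^sup>2"
      using fnl_potential_diff_le unfolding w_def c_def .
    ultimately show ?thesis
      using zero_le_power2[of "opL h w i j"] by linarith
  qed
  have "energy M h g \<epsilon> v - energy M h g \<epsilon> v'
      = h\<^sup>2 * grid_sum M (\<lambda>i j. 1/2 * (opL h v i j)\<^sup>2 + fnl_potential g \<epsilon> (v i j)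
                           - (1/2 * (opL h v' i j)\<^sup>2 + fnl_potential g \<epsilon> (v' i j)))"
    unfolding energy_eq_grid_sum grid_sum_diff by (simp add: algebra_simps)
  also have "\<dots> \<le> h\<^sup>2 * grid_sum M (\<lambda>i j. opL h v i j * opL h w i j + (fnl g \<epsilon> (v i j) * w i j + c * (w i j)\<^sup>2))"
    by (intro mult_left_mono grid_sum_mono pointwise) auto
  also have "grid_sum M (\<lambda>i j. opL h v i j * opL h w i j + (fnl g \<epsilon> (v i j) * w i j + c * (w i j)\<^sup>2))
      = grid_sum M (\<lambda>i j. mu_h g \<epsilon> h v i j * w i j + c * (w i j)\<^sup>2)" (is "?lhs = ?rhs")
  proof -
    have "?rhs = grid_sum M (\<lambda>i j. opL h (opL h v) i j * w i j + (fnl g \<epsilon> (v i j) * w i j + c * (w i j)\<^sup>2))"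
      by (simp add: mu_h_def algebra_simps)
    also have "\<dots> = grid_sum M (\<lambda>i j. opL h v i j * opL h w i j)
                    + grid_sum M (\<lambda>i j. fnl g \<epsilon> (v i j) * w i j + c * (w i j)\<^sup>2)"
      unfolding grid_sum_add grid_sum_opL_symmetric[OF opL_periodic[OF assms(1)] w_periodic] ..
    also have "\<dots> = ?lhs"
      by (rule grid_sum_add[symmetric])
    finally show ?thesis ..
  qed
  finally show ?thesis
    unfolding w_def c_def .
qed

lemma mod_energy_diff_eq:
  assumes "1 \<le> n"
  shows "mod_energy \<alpha> t M h g \<epsilon> u n - mod_energy \<alpha> t M h g \<epsilon> u (n - 1)
       = energy M h g \<epsilon> (u n) - energy M h g \<epsilon> (u (n - 1))
         + 1/2 * (\<Sum>m=1..n. Pk_delta \<alpha> t n m * (norm_h M h (mu_h g \<epsilon> h (u m)))\<^sup>2)"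
proof (cases "n = 1")
  case True
  then show ?thesis by (simp add: mod_energy_def Pk_delta_def)
next
  case False
  then show ?thesis
    using assms by (simp add: mod_energy_def sum_Pk_delta algebra_simps)
qed

lemma mod_energy_diff_le:
  assumes "1 \<le> n" "grid_periodic M (u n)" "grid_periodic M (u (n - 1))"
  shows "mod_energy \<alpha> t M h g \<epsilon> u n - mod_energy \<alpha> t M h g \<epsilon> u (n - 1)
     \<le> h\<^sup>2 * grid_sum M (\<lambda>i j.
            mu_h g \<epsilon> h (u n) i j * (u n i j - u (n - 1) i j)
            + (4 * g\<^sup>2 + 3 * \<epsilon>) / 6 * (u n i j - u (n - 1) i j)\<^sup>2
            + 1/2 * (\<Sum>m=1..n. Pk_delta \<alpha> t n m * (mu_h g \<epsilon> h (u m) i j)\<^sup>2))"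
proof -
  let ?\<mu> = "\<lambda>m. mu_h g \<epsilon> h (u m)" and ?w = "\<lambda>i j. u n i j - u (n - 1) i j"
  have "(\<Sum>m=1..n. Pk_delta \<alpha> t n m * (norm_h M h (?\<mu> m))\<^sup>2)
      = h\<^sup>2 * grid_sum M (\<lambda>i j. \<Sum>m=1..n. Pk_delta \<alpha> t n m * (?\<mu> m i j)\<^sup>2)"
    by (simp add: norm_h_sq_eq_grid_sum grid_sum_sum grid_sum_cmult sum_distrib_left mult.left_commute)
  moreover have "grid_sum M (\<lambda>i j. ?\<mu> n i j * ?w i j + (4 * g\<^sup>2 + 3 * \<epsilon>) / 6 * (?w i j)\<^sup>2
                   + 1/2 * (\<Sum>m=1..n. Pk_delta \<alpha> t n m * (?\<mu> m i j)\<^sup>2))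
      = grid_sum M (\<lambda>i j. ?\<mu> n i j * ?w i j + (4 * g\<^sup>2 + 3 * \<epsilon>) / 6 * (?w i j)\<^sup>2)
        + 1/2 * grid_sum M (\<lambda>i j. \<Sum>m=1..n. Pk_delta \<alpha> t n m * (?\<mu> m i j)\<^sup>2)"
    by (simp only: grid_sum_add grid_sum_cmult)
  ultimately show ?thesis
    using mod_energy_diff_eq[OF assms(1)] energy_diff_le[OF assms(2,3)]
    by (simp add: distrib_left)
qed

theorem theorem3p1:
  fixes \<alpha> g \<epsilon> L :: real and M N :: nat and t :: "nat \<Rightarrow> real"
    and u0 :: "real \<Rightarrow> real \<Rightarrow> real" and u :: "nat \<Rightarrow> grid"
  assumes alpha: "0 < \<alpha>" "\<alpha> < 1"
    and g: "g \<ge> 0" and eps: "\<epsilon> > 0"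
    and L: "L > 0" and M: "M > 0"
    and t0: "t 0 = 0" and tmono: "\<And>k. k \<in> {1..N} \<Longrightarrow> t (k - 1) < t k"
    and per: "\<And>n. n \<le> N \<Longrightarrow> grid_periodic M (u n)"
    and init: "\<And>i j. i \<in> {0..int M} \<Longrightarrow> j \<in> {0..int M} \<Longrightarrow>
                 u 0 i j = u0 (real_of_int i * (L / real M)) (real_of_int j * (L / real M))"
    and scheme: "\<And>n i j. n \<in> {1..N} \<Longrightarrow> i \<in> {0..int M} \<Longrightarrow> j \<in> {0..int M} \<Longrightarrow>
                 Dtau \<alpha> t (\<lambda>k. u k i j) n = - mu_h g \<epsilon> (L / real M) (u n) i j"
    and step: "tmax t N \<le> (3 / (Gamma (2 - \<alpha>) * (4 * g\<^sup>2 + 3 * \<epsilon>))) powr (1 / \<alpha>)"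
  shows "\<forall>n\<in>{1..N}. mod_energy \<alpha> t M (L / real M) g \<epsilon> u n
                    - mod_energy \<alpha> t M (L / real M) g \<epsilon> u (n - 1) \<le> 0"
proof
  fix n assume "n \<in> {1..N}"
  then have n: "1 \<le> n" "n \<le> N" by auto
  interpret L1_mesh \<alpha> t N
    using alpha tmono by unfold_locales auto
  let ?\<mu> = "\<lambda>m. mu_h g \<epsilon> (L / real M) (u m)" and ?B = "Pk_delta \<alpha> t n"
    and ?w = "\<lambda>i j. u n i j - u (n - 1) i j" and ?c = "(4 * g\<^sup>2 + 3 * \<epsilon>) / 6"
  have "(4 * g\<^sup>2 + 3 * \<epsilon>) / 3 \<le> L1a \<alpha> t n n"
    using L1a_diag_ge[OF n, of "(4 * g\<^sup>2 + 3 * \<epsilon>) / 3"] step g eps by (simp add: add_nonneg_pos)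
  then have weight: "2 * ?c * ?B n \<le> 1"
    using L1a_pos[of n n] n by (simp add: Pk_delta_diag)
  have "?w i j = - (\<Sum>m=1..n. ?B m * ?\<mu> m i j)" if "i \<in> {1..int M}" "j \<in> {1..int M}" for i j
    using Pk_delta_Dtau_sum[OF n, of "\<lambda>k. u k i j"] scheme that n by (simp add: sum_negf)
  then have "?\<mu> n i j * ?w i j + ?c * (?w i j)\<^sup>2 + 1/2 * (\<Sum>m=1..n. ?B m * (?\<mu> m i j)\<^sup>2) \<le> 0"
    if "i \<in> {1..int M}" "j \<in> {1..int M}" for i j
    using n that weight Pk_delta_nonpos Pk_delta_sum_nonneg[OF n] L1a_pos[of n n]
    by (intro memory_quadratic_form_nonpos) (simp_all add: Pk_delta_diag)
  then have "grid_sum M (\<lambda>i j. ?\<mu> n i j * ?w i j + ?c * (?w i j)\<^sup>2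
                                + 1/2 * (\<Sum>m=1..n. ?B m * (?\<mu> m i j)\<^sup>2)) \<le> 0" (is "?S \<le> 0")
    using grid_sum_mono[of M _ "\<lambda>_ _. 0"] by (simp add: grid_sum_def)
  have "mod_energy \<alpha> t M (L / real M) g \<epsilon> u n - mod_energy \<alpha> t M (L / real M) g \<epsilon> u (n - 1)
      \<le> (L / real M)\<^sup>2 * ?S"
    using per n by (intro mod_energy_diff_le) auto
  also have "\<dots> \<le> 0"
    using \<open>?S \<le> 0\<close> by (simp add: mult_nonneg_nonpos)
  finally show "mod_energy \<alpha> t M (L / real M) g \<epsilon> u n - mod_energy \<alpha> t M (L / real M) g \<epsilon> u (n - 1) \<le> 0" .
qed

end
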